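(* Let $\pi$ be an $r$-homogeneous strongly log-concave distribution with associated matroid $\mathcal{M}=(E,\mathcal{I})$ and weight function $w$. If $I\in\mathcal{I}$ and $|I|\le r-2$, then the matrix $W_I$ has at most one positive eigenvalue.
   Context: $\pi:2^{[n]}\to\mathbb{R}_{\ge0}$ has generating polynomial $g_\pi(x)=\sum_S\pi(S)\prod_{i\in S}x_i$; it is $r$-homogeneous if its support consists of $r$-sets; a polynomial with nonnegative coefficients is strongly log-concave if for every $J\subseteq[n]$, $\partial_J p$ has negative semidefinite $\nabla^2\log(\partial_J p)$ at the all-ones vector; $\pi$ is strongly log-concave if $g_\pi$ is. It is known that the support $\mathcal{B}$ of such $\pi$ is the set of bases of a matroid $\mathcal{M}=(E,\mathcal{I})$ of rank $r$ on $E=[n]$ ($\mathcal{I}$ = subsets of bases). Fix a constant $Z_r>0$ and define weights on $\mathcal{I}$ by $w(B)=\pi(B)Z_r$ for $B\in\mathcal{B}$ and $w(I)=\sum_{I'\supset I,\ |I'|=|I|+1,\ I'\in\mathcal{I}}w(I')$ for $|I|<r$; equivalently $w(I)=(r-|I|)!\sum_{B\in\mathcal{B},B\supseteq I}w(B)$, with $w(I)=0$ for dependent $I$. For $I\in\mathcal{I}$ with $|I|\le r-2$, $W_I$ is the matrix indexed by $E\setminus I$ with $(W_I)_{uv}=w(I\cup\{u,v\})$ for $u\ne v$ and $(W_I)_{uu}=0$; equivalently $W_I=(r-|I|-2)!\,Z_r\,\nabla^2\partial_I g_\pi(\mathbf{1})$. *)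

theory Defs
  imports "Jordan_Normal_Form.Char_Poly"
begin

text \<open>Multiaffine polynomials in variables x_1..x_n are represented by their coefficient
  functions c :: nat set => real (c S = coefficient of the monomial prod_{i in S} x_i).
  The generating polynomial g_pi of pi therefore has coefficient function pi itself.\<close>

type_synonym mpoly = "nat set \<Rightarrow> real"

definition pderiv_ma :: "nat \<Rightarrow> mpoly \<Rightarrow> mpoly" where
  "pderiv_ma i c = (\<lambda>S. if i \<in> S then 0 else c (insert i S))"

definition pderiv_set :: "nat set \<Rightarrow> mpoly \<Rightarrow> mpoly" where
  "pderiv_set J c = (\<lambda>S. if S \<inter> J = {} then c (S \<union> J) else 0)"

definition eval_ones :: "nat \<Rightarrow> mpoly \<Rightarrow> real" where
  "eval_ones n c = (\<Sum>S\<in>Pow {1..n}. c S)"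

text \<open>Hessian of log p at the all-ones vector (for p(1) > 0), as a function of indices:
  d_i d_j log p = (p * d_i d_j p - d_i p * d_j p) / p^2.\<close>
definition hess_log_ones :: "nat \<Rightarrow> mpoly \<Rightarrow> nat \<Rightarrow> nat \<Rightarrow> real" where
  "hess_log_ones n c i j =
     (eval_ones n c * eval_ones n (pderiv_ma i (pderiv_ma j c))
      - eval_ones n (pderiv_ma i c) * eval_ones n (pderiv_ma j c)) / (eval_ones n c)^2"

definition neg_semidef_on :: "nat set \<Rightarrow> (nat \<Rightarrow> nat \<Rightarrow> real) \<Rightarrow> bool" where
  "neg_semidef_on V M \<longleftrightarrow> (\<forall>v :: nat \<Rightarrow> real. (\<Sum>i\<in>V. \<Sum>j\<in>V. v i * M i j * v j) \<le> 0)"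

text \<open>Strong log-concavity of a polynomial with nonnegative coefficients in variables {1..n}:
  for every J, partial_J p is either identically zero (log-concave by convention) or
  has negative semidefinite Hessian of its logarithm at the all-ones vector.\<close>
definition strongly_log_concave :: "nat \<Rightarrow> mpoly \<Rightarrow> bool" where
  "strongly_log_concave n c \<longleftrightarrow>
     (\<forall>S. c S \<ge> 0) \<and>
     (\<forall>J \<subseteq> {1..n}. eval_ones n (pderiv_set J c) > 0 \<longrightarrow>
        neg_semidef_on {1..n} (hess_log_ones n (pderiv_set J c)))"

definition bases :: "(nat set \<Rightarrow> real) \<Rightarrow> nat \<Rightarrow> nat set set" where
  "bases \<pi> n = {B \<in> Pow {1..n}. \<pi> B \<noteq> 0}"

definition indep :: "(nat set \<Rightarrow> real) \<Rightarrow> nat \<Rightarrow> nat set set" where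
  "indep \<pi> n = {I. \<exists>B \<in> bases \<pi> n. I \<subseteq> B}"

definition weight :: "(nat set \<Rightarrow> real) \<Rightarrow> nat \<Rightarrow> nat \<Rightarrow> real \<Rightarrow> nat set \<Rightarrow> real" where
  "weight \<pi> n r Z I = fact (r - card I) * (\<Sum>B\<in>{B \<in> bases \<pi> n. I \<subseteq> B}. \<pi> B * Z)"

definition W_mat :: "(nat set \<Rightarrow> real) \<Rightarrow> nat \<Rightarrow> nat \<Rightarrow> real \<Rightarrow> nat set \<Rightarrow> real mat" where
  "W_mat \<pi> n r Z I =
     (let es = sorted_list_of_set ({1..n} - I) in
      mat (length es) (length es)
        (\<lambda>(a, b). if a = b then 0 else weight \<pi> n r Z (I \<union> {es ! a, es ! b})))"

definition num_pos_eigenvalues :: "real mat \<Rightarrow> nat" where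
  "num_pos_eigenvalues A = (\<Sum>a\<in>{a. a > 0 \<and> eigenvalue A a}. order a (char_poly A))"

end

theory Submission
  imports Defs "Jordan_Normal_Form.Schur_Decomposition"
begin

(*
  The matrix W_I is a nonnegative multiple of the Hessian H of the polynomial p = \<partial>_I g_\<pi> at the
  all-ones vector. With P = p(1) > 0 and G the gradient of p at 1, negative semidefiniteness of
  the Hessian of log p at 1 says P * x\<^sup>T H x \<le> (G \<bullet> x)\<^sup>2, so the quadratic form of W_I is bounded
  above by a rank-one form K (g \<bullet> x)\<^sup>2. If W_I had two orthogonal eigenvectors u, w with positive
  eigenvalues, a nonzero combination x of u and w with g \<bullet> x = 0 would have x\<^sup>T W_I x > 0.
  Distinct eigenvalues of a symmetric matrix have orthogonal eigenvectors, and a repeated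
  eigenvalue of a symmetric matrix has two orthogonal eigenvectors, which bounds the number of
  positive eigenvalues counted with multiplicity by one.
*)

lemma scalar_prod_self_pos:
  fixes v :: "real vec"
  assumes "v \<in> carrier_vec n" and "v \<noteq> 0\<^sub>v n"
  shows "v \<bullet> v > 0"
  using conjugate_square_greater_0_vec[OF assms(1)] assms(2) by simp

lemma carrier_vec_nonzero_imp_dim_pos:
  assumes "v \<in> carrier_vec n" and "v \<noteq> 0\<^sub>v n"
  shows "0 < n"
proof (rule ccontr)
  assume "\<not> 0 < n"
  hence "v = 0\<^sub>v n" using assms(1) by (intro eq_vecI) auto
  with assms(2) show False by contradiction
qed

lemma four_block_mat_if_first_col:
  assumes B: "B \<in> carrier_mat n n" and n: "0 < n"
    and col0: "col B 0 = vec n (\<lambda>i. if i = 0 then e else 0)"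
  shows "B = four_block_mat (mat 1 1 (\<lambda>_. e)) (mat 1 (n - 1) (\<lambda>(i, j). B $$ (0, Suc j)))
    (0\<^sub>m (n - 1) 1) (mat (n - 1) (n - 1) (\<lambda>(i, j). B $$ (Suc i, Suc j)))"
    (is "B = ?C")
proof (rule eq_matI)
  fix i j assume ij: "i < dim_row ?C" "j < dim_col ?C"
  hence "i < n" "j < n" using n by auto
  moreover have "B $$ (i, 0) = (if i = 0 then e else 0)"
    using arg_cong[OF col0, of "\<lambda>w. w $ i"] B \<open>i < n\<close> by auto
  ultimately show "B $$ (i, j) = ?C $$ (i, j)"
    using ij by (cases i; cases j) auto
qed (use B n in auto)

lemma eigenvector_basis_change:
  fixes A :: "'a::conjugatable_ordered_field mat"
  assumes A: "A \<in> carrier_mat n n" and v: "v \<in> carrier_vec n" and v0: "v \<noteq> 0\<^sub>v n"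
    and eigen: "A *\<^sub>v v = e \<cdot>\<^sub>v v"
  obtains W W' A2 A3 where "W \<in> carrier_mat n n" "W' \<in> carrier_mat n n"
    "W' * W = 1\<^sub>m n" "W * W' = 1\<^sub>m n" "W *\<^sub>v unit_vec n 0 = v"
    "A2 \<in> carrier_mat 1 (n - 1)" "A3 \<in> carrier_mat (n - 1) (n - 1)"
    "W' * A * W = four_block_mat (mat 1 1 (\<lambda>_. e)) A2 (0\<^sub>m (n - 1) 1) A3"
proof -
  have n: "n \<noteq> 0" using carrier_vec_nonzero_imp_dim_pos[OF v v0] by simp
  interpret cof_vec_space n "TYPE('a)" .
  define ws where "ws = gram_schmidt n (basis_completion v)"
  define W where "W = mat_of_cols n ws"
  define W' where "W' = corthogonal_inv W"
  from basis_completion[OF v v0] obtain vs where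
    b: "set (basis_completion v) \<subseteq> carrier_vec n" "distinct (basis_completion v)"
       "\<not> lin_dep (set (basis_completion v))" "length (basis_completion v) = n"
       "basis_completion v = v # vs"
    using n by (cases "basis_completion v") auto
  from gram_schmidt_result[OF b(1-3) refl, folded ws_def]
  have ws: "set ws \<subseteq> carrier_vec n" "corthogonal ws" "length ws = n"
    by (auto simp: b(4))
  have hdws: "hd ws = v" using gram_schmidt_hd[OF v, of vs] b(5) unfolding ws_def by simp
  have W: "W \<in> carrier_mat n n" unfolding W_def using ws by auto
  have W': "W' \<in> carrier_mat n n" unfolding W'_def corthogonal_inv_def using W
    by (auto simp: mat_of_rows_def)
  have W'W: "W' * W = 1\<^sub>m n"
    using corthogonal_inv_result[OF orthogonal_mat_of_cols[OF ws]] W' W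
    unfolding W'_def W_def inverts_mat_def by auto
  hence WW': "W * W' = 1\<^sub>m n" using mat_mult_left_right_inverse[OF W' W] by auto
  have "W *\<^sub>v unit_vec n 0 = col W 0"
    by (rule eq_vecI) (use W n in \<open>auto simp: mult_mat_vec_def\<close>)
  also have "\<dots> = v" using hdws ws n unfolding W_def by (cases ws) auto
  finally have Wv: "W *\<^sub>v unit_vec n 0 = v" .
  have col0: "col (W' * A * W) 0 = vec n (\<lambda>i. if i = 0 then e else 0)"
    unfolding W'_def W_def using corthogonal_col_ev_0[OF A v v0 eigen n hdws ws] .
  show thesis
    by (rule that[OF W W' W'W WW' Wv _ _ four_block_mat_if_first_col[OF _ _ col0]])
      (use W W' A n in auto)
qed

lemma four_block_mat_mult_lifted_eigenvector:
  fixes A3 :: "'a::comm_ring_1 mat"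
  assumes A2: "A2 \<in> carrier_mat 1 m" and A3: "A3 \<in> carrier_mat m m"
    and y: "y \<in> carrier_vec m" and eigen: "A3 *\<^sub>v y = e \<cdot>\<^sub>v y"
  defines "B \<equiv> four_block_mat (mat 1 1 (\<lambda>_. e)) A2 (0\<^sub>m m 1) A3" and "z \<equiv> 0\<^sub>v 1 @\<^sub>v y"
  shows "B *\<^sub>v z = e \<cdot>\<^sub>v z + (B *\<^sub>v z) $ 0 \<cdot>\<^sub>v unit_vec (1 + m) 0" (is "?l = ?r")
proof (rule eq_vecI)
  fix i assume "i < dim_vec ?r"
  hence i: "i < 1 + m" by simp
  show "?l $ i = ?r $ i"
  proof (cases i)
    case (Suc k)
    have "?l $ i = (row (0\<^sub>m m 1) k @\<^sub>v row A3 k) \<bullet> z"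
      using i Suc A2 A3 y row_four_block_mat(2)[of "mat 1 1 (\<lambda>_. e)" 1 1 A2 m "0\<^sub>m m 1" m A3 i]
      unfolding B_def z_def by simp
    also have "\<dots> = (A3 *\<^sub>v y) $ k"
      unfolding z_def using i Suc A3 y by (subst scalar_prod_append[of _ 1 _ m]) auto
    finally show ?thesis using eigen i Suc y unfolding z_def by simp
  qed (use A2 A3 y in \<open>simp add: B_def z_def\<close>)
qed (use A3 in \<open>simp add: B_def z_def\<close>)

lemma char_poly_similar_block:
  fixes A :: "'a::conjugatable_ordered_field mat"
  assumes sim: "similar_mat (four_block_mat (mat 1 1 (\<lambda>_. e)) A2 (0\<^sub>m m 1) A3) A"
    and A2: "A2 \<in> carrier_mat 1 m" and A3: "A3 \<in> carrier_mat m m"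
  shows "char_poly A = [: -e, 1 :] * char_poly A3"
proof -
  have "char_poly A = char_poly (four_block_mat (mat 1 1 (\<lambda>_. e)) A2 (0\<^sub>m m 1) A3)"
    using char_poly_similar[OF sim] by simp
  also have "\<dots> = char_poly (mat 1 1 (\<lambda>_. e)) * char_poly A3"
    by (rule char_poly_four_block_zeros_col[OF _ A2 A3]) simp
  also have "char_poly (mat 1 1 (\<lambda>_. e)) = [: -e, 1 :]"
    by (simp add: char_poly_defs det_def sign_def)
  finally show ?thesis .
qed

lemma eigenvalue_if_order_char_poly_factor:
  fixes A :: "'a::conjugatable_ordered_field mat"
  assumes cp0: "char_poly A \<noteq> 0" and cp: "char_poly A = [: -e, 1 :] * char_poly A3"
    and A3: "A3 \<in> carrier_mat m m" and ord: "Polynomial.order e (char_poly A) \<ge> 2"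
  shows "eigenvalue A3 e"
proof -
  have "Polynomial.order e (char_poly A)
      = Polynomial.order e [: -e, 1 :] + Polynomial.order e (char_poly A3)"
    unfolding cp by (rule order_mult) (use cp0 cp in simp)
  also have "Polynomial.order e [: -e, 1 :] = 1" using order_power_n_n[of e 1] by simp
  finally have "Polynomial.order e (char_poly A3) \<noteq> 0" using ord by simp
  moreover have "char_poly A3 \<noteq> 0" using cp0 cp by auto
  ultimately show ?thesis
    using order_root eigenvalue_root_char_poly[OF A3] by blast
qed

lemma mult_mat_vec_conjugate:
  fixes A :: "'a::comm_ring_1 mat"
  assumes W: "W \<in> carrier_mat n n" "W' \<in> carrier_mat n n" "W * W' = 1\<^sub>m n"
    and A: "A \<in> carrier_mat n n" and z: "z \<in> carrier_vec n"
  shows "A *\<^sub>v (W *\<^sub>v z) = W *\<^sub>v ((W' * A * W) *\<^sub>v z)"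
proof -
  have "W * (W' * A * W) = (W * W') * (A * W)"
    using assoc_mult_mat[OF W(2) A W(1)] assoc_mult_mat[OF W(1,2), of "A * W" n] W A by simp
  hence "A * W = W * (W' * A * W)" using W A by simp
  thus ?thesis using W A z by (metis assoc_mult_mat_vec mult_carrier_mat)
qed

lemma mult_mat_vec_left_invertible_cancel:
  fixes W :: "'a::comm_ring_1 mat"
  assumes W: "W \<in> carrier_mat n n" "W' \<in> carrier_mat n n" "W' * W = 1\<^sub>m n"
    and z: "z \<in> carrier_vec n" "z' \<in> carrier_vec n" and eq: "W *\<^sub>v z = W *\<^sub>v z'"
  shows "z = z'"
proof -
  have "W' *\<^sub>v (W *\<^sub>v w) = w" if "w \<in> carrier_vec n" for w
    using assoc_mult_mat_vec[OF W(2) W(1) that] W(3) that by simp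
  from this[OF z(1)] this[OF z(2)] eq show ?thesis by metis
qed

lemma append_zero_vec_neq_smult_unit_vec:
  fixes y :: "'a::comm_ring_1 vec"
  assumes "y \<in> carrier_vec m" and "y \<noteq> 0\<^sub>v m"
  shows "0\<^sub>v 1 @\<^sub>v y \<noteq> t \<cdot>\<^sub>v unit_vec (1 + m) 0"
proof
  assume eq: "0\<^sub>v 1 @\<^sub>v y = t \<cdot>\<^sub>v unit_vec (1 + m) 0"
  have "y $ i = 0" if "i < m" for i
    using arg_cong[OF eq, of "\<lambda>w. w $ Suc i"] that assms(1) by auto
  hence "y = 0\<^sub>v m" using assms(1) by (intro eq_vecI) auto
  with assms(2) show False by contradiction
qed

(* Conjugating by a basis whose first vector is an eigenvector v splits off the eigenvalue e;
   as e is a multiple root, it is also an eigenvalue of the remaining block A3, and an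
   eigenvector of A3 lifts to a vector x with (A - e) x a multiple of v. *)
lemma order_char_poly_ge_2_imp_generalized_eigenvector:
  fixes A :: "'a::conjugatable_ordered_field mat"
  assumes A: "A \<in> carrier_mat n n" and ord: "Polynomial.order e (char_poly A) \<ge> 2"
  obtains v x c where "v \<in> carrier_vec n" "v \<noteq> 0\<^sub>v n" "A *\<^sub>v v = e \<cdot>\<^sub>v v"
    "x \<in> carrier_vec n" "A *\<^sub>v x = e \<cdot>\<^sub>v x + c \<cdot>\<^sub>v v" "\<And>t. x \<noteq> t \<cdot>\<^sub>v v"
proof -
  have cp0: "char_poly A \<noteq> 0" using degree_monic_char_poly[OF A] by auto
  hence "eigenvalue A e"
    using ord order_root[of "char_poly A" e] eigenvalue_root_char_poly[OF A] by auto
  then obtain v where v: "v \<in> carrier_vec n" "v \<noteq> 0\<^sub>v n" "A *\<^sub>v v = e \<cdot>\<^sub>v v"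
    using A unfolding eigenvalue_def eigenvector_def by auto
  obtain W W' A2 A3 where W: "W \<in> carrier_mat n n" "W' \<in> carrier_mat n n"
      "W' * W = 1\<^sub>m n" "W * W' = 1\<^sub>m n" "W *\<^sub>v unit_vec n 0 = v"
    and A2: "A2 \<in> carrier_mat 1 (n - 1)" and A3: "A3 \<in> carrier_mat (n - 1) (n - 1)"
    and block: "W' * A * W = four_block_mat (mat 1 1 (\<lambda>_. e)) A2 (0\<^sub>m (n - 1) 1) A3"
    by (rule eigenvector_basis_change[OF A v])
  have n: "1 + (n - 1) = n" using carrier_vec_nonzero_imp_dim_pos[OF v(1,2)] by simp
  have "similar_mat (W' * A * W) A"
    unfolding similar_mat_def using W A
    by (intro exI[of _ W'] exI[of _ W] similar_mat_witI[of _ _ n]) auto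
  hence "char_poly A = [: -e, 1 :] * char_poly A3"
    unfolding block by (rule char_poly_similar_block[OF _ A2 A3])
  then obtain y where y: "y \<in> carrier_vec (n - 1)" "y \<noteq> 0\<^sub>v (n - 1)" "A3 *\<^sub>v y = e \<cdot>\<^sub>v y"
    using eigenvalue_if_order_char_poly_factor[OF cp0 _ A3 ord] A3
    unfolding eigenvalue_def eigenvector_def by auto
  define z where "z = 0\<^sub>v 1 @\<^sub>v y"
  define c where "c = (W' * A * W *\<^sub>v z) $ 0"
  have z: "z \<in> carrier_vec n"
    using append_carrier_vec[OF zero_carrier_vec[of 1] y(1)] n unfolding z_def by simp
  have Bz: "(W' * A * W) *\<^sub>v z = e \<cdot>\<^sub>v z + c \<cdot>\<^sub>v unit_vec n 0"
    using four_block_mat_mult_lifted_eigenvector[OF A2 A3 y(1,3)]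
    unfolding block z_def c_def n .
  have "A *\<^sub>v (W *\<^sub>v z) = W *\<^sub>v ((W' * A * W) *\<^sub>v z)"
    by (rule mult_mat_vec_conjugate[OF W(1,2,4) A z])
  also have "\<dots> = e \<cdot>\<^sub>v (W *\<^sub>v z) + c \<cdot>\<^sub>v v"
    unfolding Bz using W z by (simp add: mult_add_distrib_mat_vec mult_mat_vec)
  finally have Ax: "A *\<^sub>v (W *\<^sub>v z) = e \<cdot>\<^sub>v (W *\<^sub>v z) + c \<cdot>\<^sub>v v" .
  have "W *\<^sub>v z \<noteq> t \<cdot>\<^sub>v v" for t
  proof
    assume "W *\<^sub>v z = t \<cdot>\<^sub>v v"
    also have "t \<cdot>\<^sub>v v = W *\<^sub>v (t \<cdot>\<^sub>v unit_vec n 0)"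
      using W by (simp add: mult_mat_vec)
    finally have "z = t \<cdot>\<^sub>v unit_vec n 0"
      using mult_mat_vec_left_invertible_cancel[OF W(1-3) z] by simp
    with append_zero_vec_neq_smult_unit_vec[OF y(1,2)] show False unfolding z_def n by blast
  qed
  with that[OF v _ Ax] W z show thesis by auto
qed

lemma scalar_prod_mult_mat_vec_symmetric:
  fixes A :: "'a::comm_semiring_0 mat"
  assumes A: "A \<in> carrier_mat n n" and sym: "transpose_mat A = A"
    and u: "u \<in> carrier_vec n" and w: "w \<in> carrier_vec n"
  shows "u \<bullet> (A *\<^sub>v w) = (A *\<^sub>v u) \<bullet> w"
  using transpose_vec_mult_scalar[OF A w u] sym by simp

lemma symmetric_order_char_poly_ge_2_imp_orthogonal_eigenvectors:
  fixes A :: "real mat"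
  assumes A: "A \<in> carrier_mat n n" and sym: "transpose_mat A = A"
    and ord: "Polynomial.order e (char_poly A) \<ge> 2"
  obtains u w where "u \<in> carrier_vec n" "w \<in> carrier_vec n" "u \<noteq> 0\<^sub>v n" "w \<noteq> 0\<^sub>v n"
    "A *\<^sub>v u = e \<cdot>\<^sub>v u" "A *\<^sub>v w = e \<cdot>\<^sub>v w" "u \<bullet> w = 0"
proof -
  obtain v x c where v: "v \<in> carrier_vec n" "v \<noteq> 0\<^sub>v n" "A *\<^sub>v v = e \<cdot>\<^sub>v v"
    and x: "x \<in> carrier_vec n" "A *\<^sub>v x = e \<cdot>\<^sub>v x + c \<cdot>\<^sub>v v" and indep: "\<And>t. x \<noteq> t \<cdot>\<^sub>v v"
    using order_char_poly_ge_2_imp_generalized_eigenvector[OF A ord] by blast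
  have vv: "v \<bullet> v > 0" by (rule scalar_prod_self_pos[OF v(1,2)])
  \<comment> \<open>By symmetry, v \<bullet> A x = A v \<bullet> x, which forces c = 0.\<close>
  have "e * (v \<bullet> x) + c * (v \<bullet> v) = e * (v \<bullet> x)"
    using scalar_prod_mult_mat_vec_symmetric[OF A sym v(1) x(1)] v(1) x(1)
    unfolding v(3) x(2)
    by (simp add: scalar_prod_add_distrib[of _ n] smult_scalar_prod_distrib)
  hence Ax: "A *\<^sub>v x = e \<cdot>\<^sub>v x" using vv x v(1) by (auto intro!: eq_vecI)
  define w where "w = x - ((v \<bullet> x) / (v \<bullet> v)) \<cdot>\<^sub>v v"
  have w: "w \<in> carrier_vec n" unfolding w_def using v(1) x(1) by simp
  have "A *\<^sub>v w = e \<cdot>\<^sub>v x - ((v \<bullet> x) / (v \<bullet> v)) \<cdot>\<^sub>v (e \<cdot>\<^sub>v v)"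
    unfolding w_def using A v x(1) Ax
    by (simp add: mult_minus_distrib_mat_vec mult_mat_vec)
  also have "\<dots> = e \<cdot>\<^sub>v w"
    unfolding w_def using v(1) x(1) by (intro eq_vecI) (auto simp: algebra_simps)
  finally have "A *\<^sub>v w = e \<cdot>\<^sub>v w" .
  moreover have "v \<bullet> w = 0"
    unfolding w_def using v(1) x(1) vv by (simp add: scalar_prod_minus_distrib[of _ n])
  moreover have "w \<noteq> 0\<^sub>v n"
  proof
    assume w0: "w = 0\<^sub>v n"
    have "x $ i = ((v \<bullet> x) / (v \<bullet> v) \<cdot>\<^sub>v v) $ i" if "i < n" for i
      using arg_cong[OF w0, of "\<lambda>u. u $ i"] that v(1) x(1) unfolding w_def by auto
    hence "x = (v \<bullet> x) / (v \<bullet> v) \<cdot>\<^sub>v v" using v(1) x(1) by (intro eq_vecI) auto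
    with indep show False by blast
  qed
  ultimately show thesis using that[OF v(1) w v(2)] v(3) by blast
qed

lemma quadratic_form_orthogonal_eigenvectors:
  fixes A :: "real mat"
  assumes A: "A \<in> carrier_mat n n" and u: "u \<in> carrier_vec n" and w: "w \<in> carrier_vec n"
    and Au: "A *\<^sub>v u = a \<cdot>\<^sub>v u" and Aw: "A *\<^sub>v w = b \<cdot>\<^sub>v w" and uw: "u \<bullet> w = 0"
  shows "(p \<cdot>\<^sub>v u + q \<cdot>\<^sub>v w) \<bullet> (A *\<^sub>v (p \<cdot>\<^sub>v u + q \<cdot>\<^sub>v w))
    = p\<^sup>2 * a * (u \<bullet> u) + q\<^sup>2 * b * (w \<bullet> w)"
proof -
  have wu: "w \<bullet> u = 0" using comm_scalar_prod[OF u w] uw by simp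
  have "A *\<^sub>v (p \<cdot>\<^sub>v u + q \<cdot>\<^sub>v w) = (p * a) \<cdot>\<^sub>v u + (q * b) \<cdot>\<^sub>v w"
    using A u w by (simp add: mult_add_distrib_mat_vec mult_mat_vec Au Aw smult_smult_assoc)
  thus ?thesis using u w uw wu
    by (simp add: add_scalar_prod_distrib[of _ n] scalar_prod_add_distrib[of _ n]
        power2_eq_square algebra_simps)
qed

lemma no_orthogonal_pos_eigenvectors_if_quadratic_form_le:
  fixes A :: "real mat"
  assumes A: "A \<in> carrier_mat n n" and g: "g \<in> carrier_vec n"
    and quad: "\<And>x. x \<in> carrier_vec n \<Longrightarrow> x \<bullet> (A *\<^sub>v x) \<le> K * (g \<bullet> x)\<^sup>2"
    and u: "u \<in> carrier_vec n" "u \<noteq> 0\<^sub>v n" "A *\<^sub>v u = a \<cdot>\<^sub>v u" "a > 0"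
    and w: "w \<in> carrier_vec n" "w \<noteq> 0\<^sub>v n" "A *\<^sub>v w = b \<cdot>\<^sub>v w" "b > 0"
    and uw: "u \<bullet> w = 0"
  shows False
proof -
  obtain p q where pq: "(p, q) \<noteq> (0, 0)" "g \<bullet> (p \<cdot>\<^sub>v u + q \<cdot>\<^sub>v w) = 0"
  proof (cases "g \<bullet> u = 0")
    case True
    with that[of 1 0] show thesis using g u w by (simp add: scalar_prod_add_distrib[of _ n])
  next
    case False
    with that[of "- (g \<bullet> w)" "g \<bullet> u"] show thesis
      using g u w by (simp add: scalar_prod_add_distrib[of _ n])
  qed
  have "p\<^sup>2 * a * (u \<bullet> u) + q\<^sup>2 * b * (w \<bullet> w) \<le> 0"
    using quad[of "p \<cdot>\<^sub>v u + q \<cdot>\<^sub>v w"] pq(2) u w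
    unfolding quadratic_form_orthogonal_eigenvectors[OF A u(1) w(1) u(3) w(3) uw] by simp
  moreover have "u \<bullet> u > 0" "w \<bullet> w > 0"
    using scalar_prod_self_pos u w by auto
  ultimately show False
    using pq(1) u(4) w(4)
    by (smt (verit) mult_pos_pos power2_less_eq_zero_iff zero_le_power2 mult_nonneg_nonneg)
qed

lemma num_pos_eigenvalues_le_1_if_quadratic_form_le:
  fixes A :: "real mat"
  assumes A: "A \<in> carrier_mat n n" and sym: "transpose_mat A = A" and g: "g \<in> carrier_vec n"
    and quad: "\<And>x. x \<in> carrier_vec n \<Longrightarrow> x \<bullet> (A *\<^sub>v x) \<le> K * (g \<bullet> x)\<^sup>2"
  shows "num_pos_eigenvalues A \<le> 1"
proof -
  let ?S = "{a. a > 0 \<and> eigenvalue A a}"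
  have eigenvector: "\<exists>u. u \<in> carrier_vec n \<and> u \<noteq> 0\<^sub>v n \<and> A *\<^sub>v u = a \<cdot>\<^sub>v u"
    if "eigenvalue A a" for a
    using that A unfolding eigenvalue_def eigenvector_def by auto
  have unique: "a = b" if ab: "a \<in> ?S" "b \<in> ?S" for a b
  proof (rule ccontr)
    assume "a \<noteq> b"
    obtain u w where u: "u \<in> carrier_vec n" "u \<noteq> 0\<^sub>v n" "A *\<^sub>v u = a \<cdot>\<^sub>v u"
      and w: "w \<in> carrier_vec n" "w \<noteq> 0\<^sub>v n" "A *\<^sub>v w = b \<cdot>\<^sub>v w"
      using eigenvector ab by blast
    have "b * (u \<bullet> w) = a * (u \<bullet> w)"
      using scalar_prod_mult_mat_vec_symmetric[OF A sym u(1) w(1)] u w by simp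
    hence "u \<bullet> w = 0" using \<open>a \<noteq> b\<close> by simp
    with u w ab show False
      by (intro no_orthogonal_pos_eigenvectors_if_quadratic_form_le[OF A g quad, of u a w b]) auto
  qed
  have simple: "Polynomial.order a (char_poly A) \<le> 1" if "a \<in> ?S" for a
  proof (rule ccontr)
    assume "\<not> ?thesis"
    hence "Polynomial.order a (char_poly A) \<ge> 2" by simp
    then obtain u w where "u \<in> carrier_vec n" "w \<in> carrier_vec n" "u \<noteq> 0\<^sub>v n" "w \<noteq> 0\<^sub>v n"
      "A *\<^sub>v u = a \<cdot>\<^sub>v u" "A *\<^sub>v w = a \<cdot>\<^sub>v w" "u \<bullet> w = 0"
      by (rule symmetric_order_char_poly_ge_2_imp_orthogonal_eigenvectors[OF A sym])
    with that show False
      by (intro no_orthogonal_pos_eigenvectors_if_quadratic_form_le[OF A g quad, of u a w a]) auto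
  qed
  show ?thesis
  proof (cases "?S = {}")
    case True
    show ?thesis unfolding num_pos_eigenvalues_def True by simp
  next
    case False
    then obtain a where "a \<in> ?S" by blast
    hence "?S = {a}" using unique by blast
    thus ?thesis unfolding num_pos_eigenvalues_def using simple[OF \<open>a \<in> ?S\<close>] by simp
  qed
qed

lemma pderiv_ma_pderiv_set:
  assumes "i \<notin> J"
  shows "pderiv_ma i (pderiv_set J c) = pderiv_set (insert i J) c"
  using assms unfolding pderiv_ma_def pderiv_set_def by (auto intro!: ext)

lemma pderiv_ma_twice: "pderiv_ma i (pderiv_ma i c) = (\<lambda>_. 0)"
  unfolding pderiv_ma_def by auto

lemma sum_Pow_disjoint_union:
  assumes "finite E" and "T \<subseteq> E"
  shows "(\<Sum>S\<in>Pow E. if S \<inter> T = {} then f (S \<union> T) else 0) = (\<Sum>B\<in>{B \<in> Pow E. T \<subseteq> B}. f B)"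
proof -
  have "(\<Sum>S\<in>Pow E. if S \<inter> T = {} then f (S \<union> T) else 0)
      = (\<Sum>S\<in>{S \<in> Pow E. S \<inter> T = {}}. f (S \<union> T))"
    by (rule sum.inter_filter[symmetric]) (use assms in simp)
  also have "\<dots> = (\<Sum>B\<in>{B \<in> Pow E. T \<subseteq> B}. f B)"
    by (rule sum.reindex_bij_witness[of _ "\<lambda>B. B - T" "\<lambda>S. S \<union> T"]) (use assms in auto)
  finally show ?thesis .
qed

lemma eval_ones_pderiv_set:
  assumes "J \<subseteq> {1..n}"
  shows "eval_ones n (pderiv_set J c) = (\<Sum>B\<in>{B \<in> Pow {1..n}. J \<subseteq> B}. c B)"
  unfolding eval_ones_def pderiv_set_def by (rule sum_Pow_disjoint_union[OF _ assms]) simp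

lemma weight_eq_eval_ones_pderiv_set:
  assumes "J \<subseteq> {1..n}"
  shows "weight \<pi> n r Z J = fact (r - card J) * Z * eval_ones n (pderiv_set J \<pi>)"
proof -
  have "weight \<pi> n r Z J = fact (r - card J) * Z * (\<Sum>B\<in>{B \<in> bases \<pi> n. J \<subseteq> B}. \<pi> B)"
    unfolding weight_def by (simp add: sum_distrib_left sum_distrib_right ac_simps)
  also have "(\<Sum>B\<in>{B \<in> bases \<pi> n. J \<subseteq> B}. \<pi> B) = (\<Sum>B\<in>{B \<in> Pow {1..n}. J \<subseteq> B}. \<pi> B)"
    by (rule sum.mono_neutral_left) (auto simp: bases_def)
  finally show ?thesis unfolding eval_ones_pderiv_set[OF assms] .
qed

lemma hessian_quadratic_form_le_gradient_square:
  assumes P: "eval_ones n c > 0" and nsd: "neg_semidef_on {1..n} (hess_log_ones n c)"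
  shows "eval_ones n c *
      (\<Sum>i\<in>{1..n}. \<Sum>j\<in>{1..n}. v i * eval_ones n (pderiv_ma i (pderiv_ma j c)) * v j)
    \<le> (\<Sum>i\<in>{1..n}. v i * eval_ones n (pderiv_ma i c))\<^sup>2"
proof -
  define P H G where "P = eval_ones n c" and "H i j = eval_ones n (pderiv_ma i (pderiv_ma j c))"
    and "G i = eval_ones n (pderiv_ma i c)" for i j
  have "(\<Sum>i\<in>{1..n}. \<Sum>j\<in>{1..n}. v i * hess_log_ones n c i j * v j)
      = (\<Sum>i\<in>{1..n}. \<Sum>j\<in>{1..n}. (P * (v i * H i j * v j) - (v i * G i) * (v j * G j)) / P\<^sup>2)"
    unfolding hess_log_ones_def P_def H_def G_def by (intro sum.cong refl) (simp add: field_simps)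
  also have "\<dots> = (P * (\<Sum>i\<in>{1..n}. \<Sum>j\<in>{1..n}. v i * H i j * v j)
      - (\<Sum>i\<in>{1..n}. \<Sum>j\<in>{1..n}. (v i * G i) * (v j * G j))) / P\<^sup>2"
    by (simp add: sum_divide_distrib[symmetric] sum_subtractf sum_distrib_left)
  also have "(\<Sum>i\<in>{1..n}. \<Sum>j\<in>{1..n}. (v i * G i) * (v j * G j)) = (\<Sum>i\<in>{1..n}. v i * G i)\<^sup>2"
    by (simp add: power2_eq_square sum_product)
  finally have "(P * (\<Sum>i\<in>{1..n}. \<Sum>j\<in>{1..n}. v i * H i j * v j)
      - (\<Sum>i\<in>{1..n}. v i * G i)\<^sup>2) / P\<^sup>2 \<le> 0"
    using nsd[unfolded neg_semidef_on_def, rule_format, of v] by simp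
  thus ?thesis using P unfolding P_def H_def G_def by (simp add: divide_le_0_iff)
qed

definition scatter :: "nat list \<Rightarrow> 'a::comm_monoid_add vec \<Rightarrow> nat \<Rightarrow> 'a" where
  "scatter es x i = (\<Sum>a<length es. if es ! a = i then x $ a else 0)"

lemma sum_scatter:
  fixes f :: "nat \<Rightarrow> 'a::comm_ring_1"
  assumes "finite V" and "set es \<subseteq> V"
  shows "(\<Sum>i\<in>V. scatter es x i * f i) = (\<Sum>a<length es. x $ a * f (es ! a))"
proof -
  have "(\<Sum>i\<in>V. scatter es x i * f i)
      = (\<Sum>a<length es. \<Sum>i\<in>V. if es ! a = i then x $ a * f i else 0)"
    unfolding scatter_def sum_distrib_right by (subst sum.swap) (auto intro!: sum.cong)
  also have "\<dots> = (\<Sum>a<length es. x $ a * f (es ! a))"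
    using assms nth_mem[of _ es] by (intro sum.cong refl) (auto simp: sum.delta subset_iff)
  finally show ?thesis .
qed

lemma quadratic_form_scatter:
  fixes A :: "'a::comm_ring_1 mat"
  assumes A: "A \<in> carrier_mat (length es) (length es)"
    and entry: "\<And>a b. a < length es \<Longrightarrow> b < length es \<Longrightarrow> A $$ (a, b) = M (es ! a) (es ! b)"
    and V: "finite V" "set es \<subseteq> V" and x: "x \<in> carrier_vec (length es)"
  shows "x \<bullet> (A *\<^sub>v x) = (\<Sum>i\<in>V. \<Sum>j\<in>V. scatter es x i * M i j * scatter es x j)"
proof -
  have "x \<bullet> (A *\<^sub>v x) = (\<Sum>a<length es. x $ a * (\<Sum>b<length es. x $ b * M (es ! a) (es ! b)))"
    using A x entry
    by (auto simp: scalar_prod_def mult_mat_vec_def row_def lessThan_atLeast0 ac_simps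
        intro!: sum.cong)
  also have "\<dots> = (\<Sum>a<length es. x $ a * (\<Sum>j\<in>V. scatter es x j * M (es ! a) j))"
    by (simp only: sum_scatter[OF V])
  also have "\<dots> = (\<Sum>i\<in>V. scatter es x i * (\<Sum>j\<in>V. scatter es x j * M i j))"
    by (rule sum_scatter[OF V, symmetric])
  also have "\<dots> = (\<Sum>i\<in>V. \<Sum>j\<in>V. scatter es x i * M i j * scatter es x j)"
    by (simp add: sum_distrib_left ac_simps)
  finally show ?thesis .
qed

lemma indep_subset_ground: "I \<in> indep \<pi> n \<Longrightarrow> I \<subseteq> {1..n}"
  unfolding indep_def bases_def by auto

lemma eval_ones_pderiv_set_indep_pos:
  assumes nonneg: "\<And>S. \<pi> S \<ge> 0" and I: "I \<in> indep \<pi> n"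
  shows "eval_ones n (pderiv_set I \<pi>) > 0"
proof -
  obtain B where B: "B \<in> bases \<pi> n" "I \<subseteq> B" using I unfolding indep_def by auto
  have "0 < \<pi> B" using B(1) nonneg[of B] unfolding bases_def by auto
  also have "\<dots> \<le> (\<Sum>B\<in>{B \<in> Pow {1..n}. I \<subseteq> B}. \<pi> B)"
    using B nonneg unfolding bases_def by (intro member_le_sum) auto
  finally show ?thesis unfolding eval_ones_pderiv_set[OF indep_subset_ground[OF I]] .
qed

definition W_index :: "nat \<Rightarrow> nat set \<Rightarrow> nat list" where
  "W_index n I = sorted_list_of_set ({1..n} - I)"

lemma W_mat_carrier:
  "W_mat \<pi> n r Z I \<in> carrier_mat (length (W_index n I)) (length (W_index n I))"
  unfolding W_mat_def W_index_def Let_def by simp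

lemma transpose_W_mat: "transpose_mat (W_mat \<pi> n r Z I) = W_mat \<pi> n r Z I"
  unfolding W_mat_def Let_def by (rule eq_matI) (auto simp: insert_commute)

lemma W_mat_entry:
  assumes I: "I \<subseteq> {1..n}" and ab: "a < length (W_index n I)" "b < length (W_index n I)"
  shows "W_mat \<pi> n r Z I $$ (a, b) = fact (r - card I - 2) * Z *
    eval_ones n (pderiv_ma (W_index n I ! a) (pderiv_ma (W_index n I ! b) (pderiv_set I \<pi>)))"
proof (cases "a = b")
  case True
  thus ?thesis
    using ab unfolding W_mat_def W_index_def Let_def by (simp add: pderiv_ma_twice eval_ones_def)
next
  case False
  define i j where "i = W_index n I ! a" and "j = W_index n I ! b"
  have dist: "distinct (W_index n I)" and set: "set (W_index n I) = {1..n} - I"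
    unfolding W_index_def by auto
  have ij: "i \<in> {1..n} - I" "j \<in> {1..n} - I" "i \<noteq> j"
    using ab False dist nth_mem[OF ab(1)] nth_mem[OF ab(2)] unfolding i_def j_def set
    by (auto simp: nth_eq_iff_index_eq)
  have card: "card (I \<union> {i, j}) = card I + 2"
    using ij finite_subset[OF I] by (simp add: card_insert_if)
  have "W_mat \<pi> n r Z I $$ (a, b) = weight \<pi> n r Z (insert i (insert j I))"
    using ab False unfolding W_mat_def W_index_def i_def j_def Let_def by (simp add: insert_commute)
  also have "\<dots> = fact (r - card I - 2) * Z * eval_ones n (pderiv_set (insert i (insert j I)) \<pi>)"
    using weight_eq_eval_ones_pderiv_set[of "insert i (insert j I)"] I ij card by simp
  also have "pderiv_set (insert i (insert j I)) \<pi> = pderiv_ma i (pderiv_ma j (pderiv_set I \<pi>))"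
    using ij by (simp add: pderiv_ma_pderiv_set)
  finally show ?thesis unfolding i_def j_def .
qed

lemma W_mat_quadratic_form_le:
  assumes nonneg: "\<And>S. \<pi> S \<ge> 0" and slc: "strongly_log_concave n \<pi>"
    and I: "I \<in> indep \<pi> n" and Z: "Z \<ge> 0"
  obtains g K where "g \<in> carrier_vec (length (W_index n I))"
    "\<And>x. x \<in> carrier_vec (length (W_index n I)) \<Longrightarrow>
      x \<bullet> (W_mat \<pi> n r Z I *\<^sub>v x) \<le> K * (g \<bullet> x)\<^sup>2"
proof -
  define es c where "es = W_index n I" and "c = pderiv_set I \<pi>"
  define P H G where "P = eval_ones n c" and "H i j = eval_ones n (pderiv_ma i (pderiv_ma j c))"
    and "G i = eval_ones n (pderiv_ma i c)" for i j
  define K0 where "K0 = fact (r - card I - 2) * Z"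
  define g where "g = vec (length es) (\<lambda>a. G (es ! a))"
  have In: "I \<subseteq> {1..n}" by (rule indep_subset_ground[OF I])
  have P: "P > 0" unfolding P_def c_def by (rule eval_ones_pderiv_set_indep_pos[OF nonneg I])
  have es: "set es \<subseteq> {1..n}" unfolding es_def W_index_def by auto
  have "x \<bullet> (W_mat \<pi> n r Z I *\<^sub>v x) \<le> K0 / P * (g \<bullet> x)\<^sup>2"
    if x: "x \<in> carrier_vec (length es)" for x
  proof -
    let ?v = "scatter es x"
    have "x \<bullet> (W_mat \<pi> n r Z I *\<^sub>v x)
        = (\<Sum>i\<in>{1..n}. \<Sum>j\<in>{1..n}. ?v i * (K0 * H i j) * ?v j)"
      using W_mat_carrier W_mat_entry[OF In]
      by (intro quadratic_form_scatter[OF _ _ _ es x]) (auto simp: es_def K0_def H_def c_def)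
    also have "\<dots> = K0 * (\<Sum>i\<in>{1..n}. \<Sum>j\<in>{1..n}. ?v i * H i j * ?v j)"
      by (simp add: sum_distrib_left ac_simps)
    finally have quad:
      "x \<bullet> (W_mat \<pi> n r Z I *\<^sub>v x) = K0 * (\<Sum>i\<in>{1..n}. \<Sum>j\<in>{1..n}. ?v i * H i j * ?v j)" .
    have "g \<bullet> x = (\<Sum>i\<in>{1..n}. ?v i * G i)"
      using x unfolding sum_scatter[OF finite_atLeastAtMost es] g_def
      by (auto simp: scalar_prod_def lessThan_atLeast0 mult.commute)
    moreover have
      "P * (\<Sum>i\<in>{1..n}. \<Sum>j\<in>{1..n}. ?v i * H i j * ?v j) \<le> (\<Sum>i\<in>{1..n}. ?v i * G i)\<^sup>2"
      using hessian_quadratic_form_le_gradient_square[OF P[unfolded P_def]] slc In P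
      unfolding strongly_log_concave_def P_def H_def G_def c_def by blast
    moreover have "K0 \<ge> 0" unfolding K0_def using Z by simp
    ultimately show ?thesis
      unfolding quad using P by (simp add: field_simps mult_left_mono)
  qed
  thus thesis using that[of g "K0 / P"] unfolding g_def es_def by auto
qed

theorem proposition2p3:
  fixes n r :: nat and \<pi> :: "nat set \<Rightarrow> real" and Z :: real and I :: "nat set"
  assumes nonneg: "\<And>S. \<pi> S \<ge> 0"
    and supp: "\<And>S. \<pi> S \<noteq> 0 \<Longrightarrow> S \<subseteq> {1..n} \<and> card S = r"
    and distr: "(\<Sum>S\<in>Pow {1..n}. \<pi> S) = 1"
    and slc: "strongly_log_concave n \<pi>"
    and Zpos: "Z > 0"
    and indepI: "I \<in> indep \<pi> n"
    and cardI: "card I + 2 \<le> r"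
  shows "num_pos_eigenvalues (W_mat \<pi> n r Z I) \<le> 1"
proof -
  obtain g K where g: "g \<in> carrier_vec (length (W_index n I))"
    and quad: "\<And>x. x \<in> carrier_vec (length (W_index n I)) \<Longrightarrow>
      x \<bullet> (W_mat \<pi> n r Z I *\<^sub>v x) \<le> K * (g \<bullet> x)\<^sup>2"
    using W_mat_quadratic_form_le[where r = r, OF nonneg slc indepI less_imp_le[OF Zpos]] by blast
  show ?thesis
    by (rule num_pos_eigenvalues_le_1_if_quadratic_form_le[OF W_mat_carrier transpose_W_mat g quad])
qed

end
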